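(* Let $n \in \mathbb{Z}_{\geqslant 2}$ and $m \in \mathbb{Z}_{\geqslant 1}$. Then $$\prod_{j=1}^{\infty}\left(1 - \frac{1}{n^j}\right) n^{\varphi(m)} \leqslant \Phi_m(n) \leqslant \prod_{j=1}^{\infty}\left(1 - \frac{1}{n^j}\right)^{-1} n^{\varphi(m)}.$$
   Context: $\Phi_m(X)$ denotes the $m$th cyclotomic polynomial and $\varphi$ is Euler's totient function. *)

theory Defs
  imports "HOL-Complex_Analysis.Complex_Analysis" "HOL-Number_Theory.Number_Theory"
begin

definition cyclotomic :: "nat \<Rightarrow> complex poly" where
  "cyclotomic m = (\<Prod>k\<in>{k. 1 \<le> k \<and> k \<le> m \<and> coprime k m}.
       [:- cis (2 * pi * real k / real m), 1:])"

end

theory Submission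
  imports Defs "HOL-Computational_Algebra.Squarefree" "HOL-Computational_Algebra.Fundamental_Theorem_Algebra"
begin

(* Moebius inversion of z^m - 1 = prod_{d | m} Phi_d(z) gives, for real x > 1,
     Phi_m(x) = x^phi(m) * prod_{d | m} (1 - x^-d)^mu(m/d).
   Since |mu| <= 1 and every factor 1 - x^-d lies in (0, 1], this product lies between
   Q = prod_{d | m} (1 - x^-d) and 1/Q; and Q is at least the infinite product
   prod_{j >= 1} (1 - x^-j), whose remaining factors are all at most 1. *)

lemma prod_minus_roots_unity:
  assumes "m > 0"
  shows "(\<Prod>w | w ^ m = 1. z - w) = (z::complex) ^ m - 1"
proof -
  define p :: "complex poly" where "p = [:-1:] + Polynomial.monom 1 m"
  have poly_p: "poly p w = w ^ m - 1" for w
    by (simp add: p_def poly_monom)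
  have rsquarefree: "rsquarefree p"
    unfolding rsquarefree_roots
  proof (intro allI notI)
    fix w assume "poly p w = 0 \<and> poly (pderiv p) w = 0"
    then have "w ^ m = 1" "of_nat m * w ^ (m - 1) = 0"
      by (simp_all add: poly_p p_def pderiv_monom pderiv_add poly_monom)
    then show False
      using assms by (auto simp: power_0_left split: if_splits)
  qed
  have lead_coeff: "lead_coeff p = 1"
    using assms unfolding p_def
    by (subst lead_coeff_add_le) (simp_all add: degree_monom_eq)
  have "p = (\<Prod>w | poly p w = 0. [:-w, 1:])"
    using complex_poly_decompose_rsquarefree[OF rsquarefree] by (simp add: lead_coeff)
  then have "poly p z = (\<Prod>w | poly p w = 0. poly [:-w, 1:] z)"
    by (metis poly_prod)
  then show ?thesis
    by (simp add: poly_p)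
qed

lemma prod_minus_cis_roots_unity:
  assumes "m > 0"
  shows "(\<Prod>k=1..m. z - cis (2 * pi * real k / real m)) = (z::complex) ^ m - 1"
proof -
  let ?g = "\<lambda>k. z - cis (2 * pi * real k / real m)"
  obtain n where m: "m = Suc n"
    using assms gr0_implies_Suc by blast
  have "(\<Prod>k=1..m. ?g k) = (\<Prod>k<n. ?g (Suc k)) * ?g m"
    unfolding m by (simp add: prod.atLeast1_atMost_eq)
  also have "?g m = ?g 0"
    using assms by (simp add: complex_eq_iff)
  also have "(\<Prod>k<n. ?g (Suc k)) * ?g 0 = (\<Prod>k<m. ?g k)"
    unfolding m prod.lessThan_Suc_shift by (rule mult.commute)
  also have "\<dots> = (\<Prod>w | w ^ m = 1. z - w)"
    using prod.reindex_bij_betw[OF Complex.bij_betw_roots_unity[OF assms]] by simp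
  finally show ?thesis
    using prod_minus_roots_unity[OF assms] by simp
qed

lemma gcd_div_mult_coprime:
  fixes m d j :: nat
  assumes "d dvd m" "coprime j d"
  shows "gcd (m div d * j) m = m div d"
proof -
  have "gcd (m div d * j) m = gcd (m div d * j) (m div d * d)"
    using assms(1) by simp
  also have "\<dots> = m div d"
    using assms(2) by (simp add: gcd_mult_distrib_nat[symmetric])
  finally show ?thesis .
qed

lemma bij_betw_divisor_coprime_pairs:
  fixes m :: nat
  assumes "m > 0"
  shows "bij_betw (\<lambda>(d, j). m div d * j)
    (SIGMA d:{d. d dvd m}. {j. 1 \<le> j \<and> j \<le> d \<and> coprime j d}) {1..m}"
proof (rule bij_betw_byWitness[where f' = "\<lambda>k. (m div gcd k m, k div gcd k m)"], safe)
  fix d j assume d: "d dvd m" and j: "1 \<le> j" "j \<le> d" "coprime j d"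
  have "d > 0" "m div d > 0"
    using d assms dvd_div_eq_0_iff[OF d] by (simp_all add: dvd_pos_nat)
  moreover have "m div (m div d) = d"
    using d assms by (simp add: div_div_eq_right)
  ultimately show "m div gcd (m div d * j) m = d" "m div d * j div gcd (m div d * j) m = j"
    using d j by (simp_all add: gcd_div_mult_coprime)
  show "m div d * j \<in> {1..m}"
    using d j \<open>m div d > 0\<close>
    by (auto intro: order.trans[OF mult_le_mono2[OF j(2)]])
next
  fix k assume k: "k \<in> {1..m}"
  define g where "g = gcd k m"
  have "g > 0" "g dvd k" "g dvd m"
    using assms by (simp_all add: g_def)
  then show "m div (m div g) * (k div g) = k"
    using assms by (simp add: div_div_eq_right)
  show "m div g dvd m"
    using \<open>g dvd m\<close> by (metis dvd_div_mult_self dvd_triv_left)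
  show "coprime (k div g) (m div g)"
    using assms by (simp add: g_def div_gcd_coprime)
  show "1 \<le> k div g" "k div g \<le> m div g"
    using k dvd_div_eq_0_iff[OF \<open>g dvd k\<close>] by (auto simp: div_le_mono)
qed

lemma prod_cyclotomic_divisors:
  assumes "m > 0"
  shows "(\<Prod>d | d dvd m. poly (cyclotomic d) z) = z ^ m - 1"
proof -
  let ?S = "\<lambda>d. {j. 1 \<le> j \<and> j \<le> d \<and> coprime j d}"
  let ?root = "\<lambda>k. cis (2 * pi * real k / real m)"
  have root: "cis (2 * pi * real j / real d) = ?root (m div d * j)" if "d dvd m" for d j
  proof -
    have "d > 0"
      using that assms by (simp add: dvd_pos_nat)
    with that assms show ?thesis
      by (simp add: real_of_nat_div field_simps)
  qed
  have "(\<Prod>d | d dvd m. poly (cyclotomic d) z)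
      = (\<Prod>d | d dvd m. \<Prod>j\<in>?S d. z - cis (2 * pi * real j / real d))"
    by (simp add: cyclotomic_def poly_prod)
  also have "\<dots> = (\<Prod>(d, j)\<in>(SIGMA d:{d. d dvd m}. ?S d). z - cis (2 * pi * real j / real d))"
    using assms by (intro prod.Sigma) auto
  also have "\<dots> = (\<Prod>(d, j)\<in>(SIGMA d:{d. d dvd m}. ?S d). z - ?root (m div d * j))"
    by (intro prod.cong refl) (clarify, simp only: root)
  also have "\<dots> = (\<Prod>k=1..m. z - ?root k)"
    using prod.reindex_bij_betw[OF bij_betw_divisor_coprime_pairs[OF assms], of "\<lambda>k. z - ?root k"]
    by (simp add: case_prod_unfold)
  also have "\<dots> = z ^ m - 1"
    by (rule prod_minus_cis_roots_unity[OF assms])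
  finally show ?thesis .
qed

lemma divisor_prod_eqI:
  fixes f g :: "nat \<Rightarrow> 'a::field"
  assumes prod_eq: "\<And>k. k > 0 \<Longrightarrow> (\<Prod>d | d dvd k. f d) = (\<Prod>d | d dvd k. g d)"
    and nonzero: "\<And>k. k > 0 \<Longrightarrow> g k \<noteq> 0"
    and "m > 0"
  shows "f m = g m"
  using \<open>m > 0\<close>
proof (induction m rule: less_induct)
  case (less m)
  let ?P = "{d. d dvd m} - {m}"
  have proper: "d < m \<and> d > 0" if "d \<in> ?P" for d
    using that less.prems by (auto simp: dvd_pos_nat dest: dvd_imp_le)
  have fin: "finite {d. d dvd m}" and mem: "m \<in> {d. d dvd m}"
    using less.prems by simp_all
  have "f m * (\<Prod>d\<in>?P. g d) = g m * (\<Prod>d\<in>?P. g d)"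
  proof -
    have "(\<Prod>d\<in>?P. f d) = (\<Prod>d\<in>?P. g d)"
      using proper less.IH by (intro prod.cong) auto
    then show ?thesis
      using prod_eq[OF less.prems] prod.remove[OF fin mem, of f] prod.remove[OF fin mem, of g]
      by simp
  qed
  moreover have "(\<Prod>d\<in>?P. g d) \<noteq> 0"
    using proper nonzero by (simp add: fin)
  ultimately show ?case
    by simp
qed

definition moebius_mu :: "nat \<Rightarrow> int" where
  "moebius_mu n = (if squarefree n then (-1) ^ card (prime_factors n) else 0)"

lemma abs_moebius_mu_le: "\<bar>moebius_mu n\<bar> \<le> 1"
  by (simp add: moebius_mu_def)

lemma moebius_mu_prime_mult:
  assumes p: "prime p" and "\<not> p dvd n"
  shows "moebius_mu (p * n) = - moebius_mu n"
proof -
  have "n > 0"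
    using assms(2) by (auto intro: gr0I)
  have "squarefree (p * n) \<longleftrightarrow> squarefree n"
    using assms squarefree_mult_coprime[OF prime_imp_coprime squarefree_prime]
    by (blast dest: squarefree_multD)
  moreover have "prime_factors (p * n) = insert p (prime_factors n)"
    using p \<open>n > 0\<close> by (simp add: prime_factors_product prime_prime_factors prime_gt_0_nat)
  moreover have "p \<notin> prime_factors n"
    using assms(2) by (simp add: in_prime_factors_iff)
  ultimately show ?thesis
    by (simp add: moebius_mu_def)
qed

lemma sum_moebius_mu_divisors:
  assumes "k > 0"
  shows "(\<Sum>d | d dvd k. moebius_mu d) = (if k = 1 then 1 else 0)"
proof (cases "k = 1")
  case True
  then show ?thesis
    by (simp add: moebius_mu_def)
next
  case False
  then obtain p where p: "prime p" "p dvd k"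
    using prime_factor_nat by blast
  define coprime_divs where "coprime_divs = {d. d dvd k \<and> \<not> p dvd d}"
  define multiple_divs where "multiple_divs = {d. d dvd k \<and> p dvd d}"
  have fin: "finite coprime_divs" "finite multiple_divs"
    using assms by (simp_all add: coprime_divs_def multiple_divs_def)
  have "(\<Sum>d\<in>multiple_divs. moebius_mu d) = (\<Sum>d\<in>(*) p ` coprime_divs. moebius_mu d)"
  proof (rule sum.mono_neutral_right[OF fin(2)])
    show "(*) p ` coprime_divs \<subseteq> multiple_divs"
      using p by (auto simp: coprime_divs_def multiple_divs_def intro: divides_mult prime_imp_coprime)
    show "\<forall>d\<in>multiple_divs - (*) p ` coprime_divs. moebius_mu d = 0"
    proof
      fix d assume d: "d \<in> multiple_divs - (*) p ` coprime_divs"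
      then obtain c where c: "d = p * c"
        by (auto simp: multiple_divs_def)
      with d have "p dvd c"
        by (auto simp: multiple_divs_def coprime_divs_def intro: dvd_mult_right)
      then have "p\<^sup>2 dvd d"
        by (auto simp: c power2_eq_square)
      with p(1) have "\<not> squarefree d"
        by (auto dest: squarefreeD simp: prime_nat_iff)
      then show "moebius_mu d = 0"
        by (simp add: moebius_mu_def)
    qed
  qed
  also have "\<dots> = - (\<Sum>d\<in>coprime_divs. moebius_mu d)"
    using p(1) by (subst sum.reindex) (auto simp: inj_on_def prime_gt_0_nat coprime_divs_def
        moebius_mu_prime_mult sum_negf)
  finally have "(\<Sum>d\<in>coprime_divs \<union> multiple_divs. moebius_mu d) = 0"
    using fin by (subst sum.union_disjoint) (auto simp: coprime_divs_def multiple_divs_def)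
  moreover have "coprime_divs \<union> multiple_divs = {d. d dvd k}"
    by (auto simp: coprime_divs_def multiple_divs_def)
  ultimately show ?thesis
    using False by simp
qed

lemma sum_divisors_multiples:
  fixes e m :: nat
  assumes "e dvd m" "m > 0"
  shows "(\<Sum>d | d dvd m \<and> e dvd d. f (d div e)) = (\<Sum>c | c dvd m div e. f c)"
proof -
  have "e > 0"
    using assms by (simp add: dvd_pos_nat)
  have "{d. d dvd m \<and> e dvd d} = (*) e ` {c. c dvd m div e}"
  proof -
    have "e * c dvd m \<longleftrightarrow> c dvd m div e" for c
      using assms \<open>e > 0\<close> by (metis dvd_div_mult_self mult.commute nat_mult_dvd_cancel1)
    then show ?thesis
      by (auto simp: dvd_def)
  qed
  then show ?thesis
    using \<open>e > 0\<close> by (simp add: sum.reindex inj_on_def)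
qed

lemma moebius_inversion:
  fixes L :: "nat \<Rightarrow> 'a::comm_ring_1"
  assumes "m > 0"
  shows "(\<Sum>d | d dvd m. \<Sum>e | e dvd d. of_int (moebius_mu (d div e)) * L e) = L m"
proof -
  let ?D = "{d. d dvd m}"
  have fin: "finite ?D"
    using assms by simp
  have "(\<Sum>d\<in>?D. \<Sum>e | e dvd d. of_int (moebius_mu (d div e)) * L e)
      = (\<Sum>d\<in>?D. \<Sum>e | e \<in> ?D \<and> e dvd d. of_int (moebius_mu (d div e)) * L e)"
    by (intro sum.cong) (auto intro: dvd_trans)
  also have "\<dots> = (\<Sum>e\<in>?D. \<Sum>d | d \<in> ?D \<and> e dvd d. of_int (moebius_mu (d div e)) * L e)"
    using sum.swap_restrict[OF fin fin] by simp
  also have "\<dots> = (\<Sum>e\<in>?D. of_int (\<Sum>c | c dvd m div e. moebius_mu c) * L e)"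
  proof (intro sum.cong refl)
    fix e assume "e \<in> ?D"
    then show "(\<Sum>d | d \<in> ?D \<and> e dvd d. of_int (moebius_mu (d div e)) * L e)
        = of_int (\<Sum>c | c dvd m div e. moebius_mu c) * L e"
      using assms sum_divisors_multiples[of e m "\<lambda>c. of_int (moebius_mu c) * L e"]
      by (simp add: sum_distrib_right)
  qed
  also have "\<dots> = (\<Sum>e\<in>?D. if e = m then L e else 0)"
  proof (intro sum.cong refl)
    fix e assume "e \<in> ?D"
    then have "m div e > 0" "m div e = 1 \<longleftrightarrow> e = m"
      using assms by (auto simp: dvd_def)
    then show "of_int (\<Sum>c | c dvd m div e. moebius_mu c) * L e = (if e = m then L e else 0)"
      by (simp add: sum_moebius_mu_divisors)
  qed
  also have "\<dots> = L m"
    using fin by simp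
  finally show ?thesis .
qed

lemma poly_cyclotomic_of_real:
  fixes x :: real
  assumes "x > 1" "m > 0"
  shows "poly (cyclotomic m) (of_real x) =
    of_real (x ^ totient m * exp (\<Sum>d | d dvd m. of_int (moebius_mu (m div d)) * ln (1 - 1 / x ^ d)))"
proof -
  define L where "L d = ln (1 - 1 / x ^ d)" for d :: nat
  define S where "S k = (\<Sum>d | d dvd k. of_int (moebius_mu (k div d)) * L d)" for k
  have "poly (cyclotomic m) (of_real x) = complex_of_real (x ^ totient m * exp (S m))"
  proof (rule divisor_prod_eqI[OF _ _ \<open>m > 0\<close>])
    fix k :: nat assume "k > 0"
    have "exp (L k) = 1 - 1 / x ^ k"
      using assms \<open>k > 0\<close> by (simp add: L_def)
    then have "x ^ k * exp (L k) = x ^ k - 1"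
      using assms by (simp add: right_diff_distrib)
    moreover have "(\<Sum>d | d dvd k. totient d) = k" "(\<Sum>d | d dvd k. S d) = L k"
      using \<open>k > 0\<close> by (simp_all add: totient_divisor_sum S_def moebius_inversion)
    ultimately have real_prod: "(\<Prod>d | d dvd k. x ^ totient d * exp (S d)) = x ^ k - 1"
      using \<open>k > 0\<close> by (simp add: prod.distrib flip: power_sum exp_sum)
    have "(\<Prod>d | d dvd k. poly (cyclotomic d) (of_real x)) = of_real x ^ k - 1"
      using \<open>k > 0\<close> by (rule prod_cyclotomic_divisors)
    also have "\<dots> = of_real (\<Prod>d | d dvd k. x ^ totient d * exp (S d))"
      by (simp add: real_prod)
    also have "\<dots> = (\<Prod>d | d dvd k. complex_of_real (x ^ totient d * exp (S d)))"
      by (rule of_real_prod)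
    finally show "(\<Prod>d | d dvd k. poly (cyclotomic d) (of_real x))
        = (\<Prod>d | d dvd k. complex_of_real (x ^ totient d * exp (S d)))" .
  next
    show "complex_of_real (x ^ totient k * exp (S k)) \<noteq> 0" for k
      using assms by simp
  qed
  then show ?thesis
    by (simp add: S_def L_def)
qed

lemma sum_nonpos_weighted_bounds:
  fixes a w :: "'a \<Rightarrow> real"
  assumes "\<And>i. i \<in> A \<Longrightarrow> a i \<le> 0" and "\<And>i. i \<in> A \<Longrightarrow> \<bar>w i\<bar> \<le> 1"
  shows "sum a A \<le> (\<Sum>i\<in>A. w i * a i)" and "(\<Sum>i\<in>A. w i * a i) \<le> - sum a A"
proof -
  have "a i \<le> w i * a i \<and> w i * a i \<le> - a i" if "i \<in> A" for i
  proof -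
    have "\<bar>w i * a i\<bar> \<le> - a i"
      using assms[OF that] mult_right_mono[of "\<bar>w i\<bar>" 1 "\<bar>a i\<bar>"] by (simp add: abs_mult)
    then show ?thesis
      by (auto dest: abs_le_D1 abs_le_D2)
  qed
  then show "sum a A \<le> (\<Sum>i\<in>A. w i * a i)" "(\<Sum>i\<in>A. w i * a i) \<le> - sum a A"
    by (auto intro: sum_mono simp flip: sum_negf)
qed

lemma cyclotomic_bounds_divisor_prod:
  fixes x :: real
  assumes "x > 1" "m > 0"
  defines "Q \<equiv> \<Prod>d | d dvd m. 1 - 1 / x ^ d"
  shows "Q * x ^ totient m \<le> Re (poly (cyclotomic m) (of_real x))"
    and "Re (poly (cyclotomic m) (of_real x)) \<le> inverse Q * x ^ totient m"
proof -
  define L where "L d = ln (1 - 1 / x ^ d)" for d :: nat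
  define S where "S = (\<Sum>d | d dvd m. of_int (moebius_mu (m div d)) * L d)"
  have factor_pos: "1 - 1 / x ^ d > 0" if "d dvd m" for d
    using assms that by (simp add: dvd_pos_nat)
  then have Q_eq: "Q = exp (\<Sum>d | d dvd m. L d)"
    using \<open>m > 0\<close> by (simp add: Q_def L_def exp_sum)
  have weight: "\<bar>real_of_int (moebius_mu k)\<bar> \<le> 1" for k
    using abs_moebius_mu_le[of k] by (simp flip: of_int_abs)
  have L_nonpos: "L d \<le> 0" if "d dvd m" for d
    using factor_pos[OF that] \<open>x > 1\<close> by (simp add: L_def)
  have "(\<Sum>d | d dvd m. L d) \<le> S" "S \<le> - (\<Sum>d | d dvd m. L d)"
    unfolding S_def by (rule sum_nonpos_weighted_bounds; simp add: L_nonpos weight)+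
  then have "Q \<le> exp S" "exp S \<le> inverse Q"
    by (simp_all add: Q_eq flip: exp_minus)
  moreover have "Re (poly (cyclotomic m) (of_real x)) = exp S * x ^ totient m"
    using assms by (simp add: poly_cyclotomic_of_real S_def L_def)
  moreover have "x ^ totient m > 0"
    using assms by simp
  ultimately show "Q * x ^ totient m \<le> Re (poly (cyclotomic m) (of_real x))"
    and "Re (poly (cyclotomic m) (of_real x)) \<le> inverse Q * x ^ totient m"
    by simp_all
qed

lemma convergent_prod_one_minus_inverse_powers:
  fixes x :: real
  assumes "x > 1"
  shows "convergent_prod (\<lambda>j. 1 - 1 / x ^ Suc j)"
proof -
  have "summable (\<lambda>j. 1 / x * (1 / x) ^ j)"
    using assms by (intro summable_mult summable_geometric) simp
  moreover have "\<bar>- (1 / x ^ Suc j)\<bar> = 1 / x * (1 / x) ^ j" for j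
    using assms by (simp add: power_divide)
  ultimately have "summable (\<lambda>j. \<bar>- (1 / x ^ Suc j)\<bar>)"
    by simp
  moreover have "- (1 / x ^ Suc j) \<noteq> -1" for j
    using one_less_power[OF assms, of "Suc j"] by simp
  ultimately have "convergent_prod (\<lambda>j. 1 + - (1 / x ^ Suc j))"
    by (rule summable_imp_convergent_prod_real)
  then show ?thesis
    by simp
qed

lemma prodinf_le_prod:
  fixes f :: "nat \<Rightarrow> real"
  assumes "convergent_prod f" "\<And>i. 0 \<le> f i" "\<And>i. f i \<le> 1" "finite A"
  shows "prodinf f \<le> prod f A"
proof -
  obtain N where "A \<subseteq> {..<N}"
    using finite_nat_bounded[OF \<open>finite A\<close>] by blast
  show ?thesis
  proof (rule prodinf_le_const[OF \<open>convergent_prod f\<close>])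
    fix n assume "n \<ge> N"
    then have "prod f {..<n} = prod f ({..<n} - A) * prod f A"
      using \<open>A \<subseteq> {..<N}\<close> by (intro prod.subset_diff) auto
    also have "\<dots> \<le> prod f A"
      using assms by (intro mult_left_le_one_le prod_le_1 prod_nonneg) auto
    finally show "prod f {..<n} \<le> prod f A" .
  qed
qed

lemma cyclotomic_bounds:
  fixes x :: real
  assumes "x > 1" "m > 0"
  defines "P \<equiv> \<Prod>j. 1 - 1 / x ^ Suc j"
  shows "P * x ^ totient m \<le> Re (poly (cyclotomic m) (of_real x))"
    and "Re (poly (cyclotomic m) (of_real x)) \<le> inverse P * x ^ totient m"
proof -
  define Q where "Q = (\<Prod>d | d dvd m. 1 - 1 / x ^ d)"
  have factor_pos: "0 < 1 - 1 / x ^ Suc j" and factor_le_1: "1 - 1 / x ^ Suc j \<le> 1" for j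
    using one_less_power[OF \<open>x > 1\<close>, of "Suc j"] by simp_all
  have conv: "convergent_prod (\<lambda>j. 1 - 1 / x ^ Suc j)"
    using \<open>x > 1\<close> by (rule convergent_prod_one_minus_inverse_powers)
  have "P > 0"
    unfolding P_def using conv factor_pos by (rule less_0_prodinf)
  let ?J = "{j. Suc j dvd m}"
  have "{d. d dvd m} = Suc ` ?J"
    using \<open>m > 0\<close> by (auto simp: image_iff) (metis Suc_pred dvd_pos_nat)
  then have "Q = (\<Prod>j\<in>?J. 1 - 1 / x ^ Suc j)"
    by (simp add: Q_def prod.reindex)
  moreover have "?J \<subseteq> {..<m}"
    using dvd_imp_le[OF _ \<open>m > 0\<close>] by (auto simp flip: Suc_le_eq)
  then have "finite ?J"
    by (rule finite_subset) simp
  ultimately have "P \<le> Q"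
    unfolding P_def by (simp only: prodinf_le_prod[OF conv less_imp_le[OF factor_pos] factor_le_1])
  then have "P * x ^ totient m \<le> Q * x ^ totient m" "inverse Q * x ^ totient m \<le> inverse P * x ^ totient m"
    using assms \<open>P > 0\<close> by (simp_all add: le_imp_inverse_le)
  then show "P * x ^ totient m \<le> Re (poly (cyclotomic m) (of_real x))"
    and "Re (poly (cyclotomic m) (of_real x)) \<le> inverse P * x ^ totient m"
    using cyclotomic_bounds_divisor_prod[OF assms(1,2)] unfolding Q_def by linarith+
qed

theorem lemma2:
  fixes n m :: nat
  assumes "n \<ge> 2" and "m \<ge> 1"
  shows "(\<Prod>j. 1 - 1 / real n ^ Suc j) * real n ^ totient m \<le> Re (poly (cyclotomic m) (of_nat n))
    \<and> Re (poly (cyclotomic m) (of_nat n)) \<le> inverse (\<Prod>j. 1 - 1 / real n ^ Suc j) * real n ^ totient m"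
  using cyclotomic_bounds[of "real n" m] assms by simp

end
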